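(* Let $\mathcal{A}$ be an arrangement of distinct lines in $\mathbb{P}^2_{\mathbb{C}}$ such that $|\operatorname{mult}(\mathcal{A})\cap H|\le 2$ for every $H\in\mathcal{A}$. Then $\mathcal{A}$ is inductively connected, and hence $\mathcal{R}(I(\mathcal{A}))$ is irreducible.
   Context: $\operatorname{mult}(\mathcal{A})$ is the set of points of $\mathbb{P}^2$ lying on at least three lines of $\mathcal{A}$. An arrangement $\mathcal{A}$ is inductively connected (i.c.) if its lines can be numbered $\mathcal{A}=\{H_1,\dots,H_n\}$ so that, with $\mathcal{A}_t=\{H_1,\dots,H_t\}$, one has $|H_t\cap\operatorname{mult}(\mathcal{A}_t)|\le 2$ for all $t$. Lines are identified with points of $(\mathbb{P}^2)^*$ via their coefficients; the incidence $I(\mathcal{A})$ is the set of triples $\{i,j,k\}$ with $H_i\cap H_j\cap H_k\neq\emptyset$; and $\mathcal{R}(I)=\{(H_1,\dots,H_n)\in((\mathbb{P}^2)^* )^n: H_i\ne H_j\ (i\ne j),\ \det(H_i,H_j,H_k)=0 \text{ iff } \{i,j,k\}\in I\}$ with the Zariski topology. *)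

theory Defs
  imports "HOL-Analysis.Analysis"
begin

text \<open>Points of P^2(C) and lines of P^2(C) (= points of the dual plane) are both
represented by nonzero coefficient vectors in C^3; two vectors represent the same
point/line iff they are proportional.  An arrangement of n lines is a map
H :: nat => complex^3 whose values H 0, ..., H (n-1) are the lines (0-based numbering).\<close>

definition proportional :: "complex^3 \<Rightarrow> complex^3 \<Rightarrow> bool" where
  "proportional u v \<longleftrightarrow> (\<exists>c. c \<noteq> 0 \<and> u = c *s v)"

definition proj_pt :: "complex^3 \<Rightarrow> (complex^3) set" where
  "proj_pt p = {c *s p | c. c \<noteq> 0}"

definition on_line :: "complex^3 \<Rightarrow> complex^3 \<Rightarrow> bool" where
  "on_line p h \<longleftrightarrow> (\<Sum>i\<in>UNIV. h $ i * p $ i) = 0"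

definition line_pts :: "complex^3 \<Rightarrow> (complex^3) set set" where
  "line_pts h = {proj_pt p | p. p \<noteq> 0 \<and> on_line p h}"

definition arrangement :: "nat \<Rightarrow> (nat \<Rightarrow> complex^3) \<Rightarrow> bool" where
  "arrangement n H \<longleftrightarrow> (\<forall>i<n. H i \<noteq> 0) \<and>
     (\<forall>i<n. \<forall>j<n. i \<noteq> j \<longrightarrow> \<not> proportional (H i) (H j))"

definition mult_pts :: "nat set \<Rightarrow> (nat \<Rightarrow> complex^3) \<Rightarrow> (complex^3) set set" where
  "mult_pts S H = {proj_pt p | p. p \<noteq> 0 \<and> card {i \<in> S. on_line p (H i)} \<ge> 3}"

text \<open>"|X| <= 2" for a possibly infinite set.\<close>
definition at_most_two :: "'a set \<Rightarrow> bool" where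
  "at_most_two X \<longleftrightarrow> finite X \<and> card X \<le> 2"

definition inductively_connected :: "nat \<Rightarrow> (nat \<Rightarrow> complex^3) \<Rightarrow> bool" where
  "inductively_connected n H \<longleftrightarrow>
     (\<exists>\<sigma>. bij_betw \<sigma> {..<n} {..<n} \<and>
        (\<forall>t\<in>{1..n}. at_most_two
            (line_pts (H (\<sigma> (t - 1))) \<inter> mult_pts (\<sigma> ` {..<t}) H)))"

definition incidence :: "nat \<Rightarrow> (nat \<Rightarrow> complex^3) \<Rightarrow> nat set set" where
  "incidence n H = {{i, j, k} | i j k. i < n \<and> j < n \<and> k < n \<and> i \<noteq> j \<and> j \<noteq> k \<and> i \<noteq> k \<and>
      (\<exists>p. p \<noteq> 0 \<and> on_line p (H i) \<and> on_line p (H j) \<and> on_line p (H k))}"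

definition det3 :: "complex^3 \<Rightarrow> complex^3 \<Rightarrow> complex^3 \<Rightarrow> complex" where
  "det3 a b c = det (\<chi> r. if r = 1 then a else if r = 2 then b else c :: complex^3^3)"

text \<open>Representatives of points of ((P^2)^*)^n: tuples of nonzero vectors, padded by 0.\<close>
definition proj_tuples :: "nat \<Rightarrow> (nat \<Rightarrow> complex^3) set" where
  "proj_tuples n = {G. (\<forall>i<n. G i \<noteq> 0) \<and> (\<forall>i\<ge>n. G i = 0)}"

text \<open>The realization space R(I) (as the set of representative tuples; it is stable
under rescaling each entry by a nonzero scalar).\<close>
definition realization_space :: "nat \<Rightarrow> nat set set \<Rightarrow> (nat \<Rightarrow> complex^3) set" where
  "realization_space n I = {G \<in> proj_tuples n.
      (\<forall>i<n. \<forall>j<n. i \<noteq> j \<longrightarrow> \<not> proportional (G i) (G j)) \<and>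
      (\<forall>i<n. \<forall>j<n. \<forall>k<n. i \<noteq> j \<and> j \<noteq> k \<and> i \<noteq> k \<longrightarrow>
          (det3 (G i) (G j) (G k) = 0 \<longleftrightarrow> {i, j, k} \<in> I))}"

inductive_set polyfun :: "nat \<Rightarrow> ((nat \<Rightarrow> complex^3) \<Rightarrow> complex) set" for n where
  const: "(\<lambda>G. c) \<in> polyfun n"
| coord: "i < n \<Longrightarrow> (\<lambda>G. G i $ r) \<in> polyfun n"
| add: "f \<in> polyfun n \<Longrightarrow> g \<in> polyfun n \<Longrightarrow> (\<lambda>G. f G + g G) \<in> polyfun n"
| mult: "f \<in> polyfun n \<Longrightarrow> g \<in> polyfun n \<Longrightarrow> (\<lambda>G. f G * g G) \<in> polyfun n"

definition multihom :: "nat \<Rightarrow> ((nat \<Rightarrow> complex^3) \<Rightarrow> complex) \<Rightarrow> bool" where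
  "multihom n f \<longleftrightarrow> f \<in> polyfun n \<and>
     (\<exists>d :: nat \<Rightarrow> nat. \<forall>G (c :: nat \<Rightarrow> complex).
        f (\<lambda>i. c i *s G i) = (\<Prod>i<n. c i ^ d i) * f G)"

definition zariski_closed :: "nat \<Rightarrow> (nat \<Rightarrow> complex^3) set \<Rightarrow> bool" where
  "zariski_closed n Z \<longleftrightarrow> (\<exists>F. (\<forall>f\<in>F. multihom n f) \<and>
      Z = {G \<in> proj_tuples n. \<forall>f\<in>F. f G = 0})"

definition zariski_irreducible :: "nat \<Rightarrow> (nat \<Rightarrow> complex^3) set \<Rightarrow> bool" where
  "zariski_irreducible n X \<longleftrightarrow> X \<noteq> {} \<and>
     (\<forall>Z1 Z2. zariski_closed n Z1 \<and> zariski_closed n Z2 \<and> X \<subseteq> Z1 \<union> Z2 \<longrightarrow>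
        X \<subseteq> Z1 \<or> X \<subseteq> Z2)"

end

theory Submission
  imports Defs "HOL-Computational_Algebra.Polynomial"
begin

text \<open>
  Points and lines of the complex projective plane are nonzero vectors of
  \<open>complex^3\<close>; the line through two points (and the meet of two lines) is their cross
  product, and incidence is the bilinear pairing \<open>cdot\<close>.

  Inductive connectedness is immediate: numbering the lines as given, the multiple points of
  the first \<open>t\<close> lines are multiple points of the whole arrangement, so each new line meets
  them in at most two points.

  For irreducibility of the realization space \<open>R\<close> we build a polynomial parametrization.
  Going through the lines in order, the earlier lines meeting on line \<open>t\<close> determine at most
  two multiple points on it (this is where the hypothesis is used).  Line \<open>t\<close> is then chosen
  freely, as the line through one such point and a free point, or as the line through two such
  points.  Every realization arises this way up to rescaling, and wherever a suitable polynomial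
  \<open>nondeg\<close> does not vanish, the parametrized lines realize all concurrences of the arrangement
  and no others.  An abstract criterion (image of an irreducible affine space under a polynomial
  map, generically landing in the set) then gives irreducibility.
\<close>

text \<open>The cross product: the point where two lines meet, or the line through two points.\<close>
definition ccross :: "complex^3 \<Rightarrow> complex^3 \<Rightarrow> complex^3" where
  "ccross x y = (\<chi> i. if i = 1 then x$2 * y$3 - x$3 * y$2
                 else if i = 2 then x$3 * y$1 - x$1 * y$3
                 else x$1 * y$2 - x$2 * y$1)"

definition cdot :: "complex^3 \<Rightarrow> complex^3 \<Rightarrow> complex" where
  "cdot x y = (\<Sum>i\<in>UNIV. x $ i * y $ i)"

lemma ccross_nth [simp]:
  "ccross x y $ 1 = x$2 * y$3 - x$3 * y$2"
  "ccross x y $ 2 = x$3 * y$1 - x$1 * y$3"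
  "ccross x y $ 3 = x$1 * y$2 - x$2 * y$1"
  by (simp_all add: ccross_def)

lemma cdot_expand: "cdot x y = x$1 * y$1 + x$2 * y$2 + x$3 * y$3"
  by (simp add: cdot_def sum_3)

lemma vec3_eq_iff: "(x::complex^3) = y \<longleftrightarrow> x$1 = y$1 \<and> x$2 = y$2 \<and> x$3 = y$3"
  by (simp add: vec_eq_iff forall_3)

lemma on_line_iff_cdot: "on_line p h \<longleftrightarrow> cdot h p = 0"
  by (simp add: on_line_def cdot_def)

lemma det3_eq_cdot_ccross: "det3 a b c = cdot c (ccross a b)"
  by (simp add: det3_def det_3 cdot_expand) algebra

lemma cdot_ccross_self [simp]: "cdot x (ccross x y) = 0" "cdot y (ccross x y) = 0"
  by (simp_all add: cdot_expand) algebra+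

lemma ccross_cdot_self [simp]: "cdot (ccross x y) x = 0" "cdot (ccross x y) y = 0"
  by (simp_all add: cdot_expand) algebra+

lemma cdot_commute: "cdot x y = cdot y x"
  by (simp add: cdot_def mult.commute)

lemma cdot_scale [simp]: "cdot x (m *s y) = m * cdot x y" "cdot (m *s x) y = m * cdot x y"
  by (simp_all add: cdot_expand algebra_simps)

lemma ccross_scale [simp]: "ccross (m *s x) y = m *s ccross x y" "ccross x (m *s y) = m *s ccross x y"
  by (simp_all add: vec3_eq_iff algebra_simps)

lemma ccross_antisym: "ccross y x = - ccross x y"
  by (simp add: vec3_eq_iff)

lemma ccross_swap_neg: "ccross x y = ccross y (- x)"
  by (simp add: vec3_eq_iff)

lemma ccross_ccross_left: "ccross (ccross x y) p = cdot x p *s y - cdot y p *s x"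
  by (simp add: vec3_eq_iff cdot_expand) algebra

lemma ccross_ccross_right: "ccross x (ccross y z) = cdot x z *s y - cdot x y *s z"
  by (simp add: vec3_eq_iff cdot_expand) algebra

lemma det3_swap: "det3 b a c = - det3 a b c" "det3 a c b = - det3 a b c"
  by (simp_all add: det3_eq_cdot_ccross cdot_expand) algebra+

lemma ccross_eq_0_imp_multiple:
  assumes "p \<noteq> 0" "ccross u p = 0" shows "\<exists>m. u = m *s p"
proof -
  have e: "u$2 * p$3 = u$3 * p$2" "u$3 * p$1 = u$1 * p$3" "u$1 * p$2 = u$2 * p$1"
    using assms(2) by (simp_all add: vec3_eq_iff)
  obtain r where r: "p $ r \<noteq> 0" using assms(1) by (auto simp: vec_eq_iff)
  have "r = 1 \<or> r = 2 \<or> r = 3" by (rule exhaust_3)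
  then have "u = (u $ r / p $ r) *s p"
    using r e by (auto simp: vec3_eq_iff field_simps)
  then show ?thesis ..
qed

lemma ccross_eq_0_iff_proportional:
  assumes "x \<noteq> 0" "y \<noteq> 0" shows "ccross x y = 0 \<longleftrightarrow> proportional x y"
proof
  assume "ccross x y = 0"
  then obtain m where m: "x = m *s y" using ccross_eq_0_imp_multiple[OF assms(2)] by blast
  with assms(1) have "m \<noteq> 0" by auto
  with m show "proportional x y" by (auto simp: proportional_def)
qed (auto simp: proportional_def vec3_eq_iff)

lemma proportional_sym: "proportional x y \<Longrightarrow> proportional y x"
  unfolding proportional_def
  by (metis field_class.field_inverse vector_smult_assoc vector_smult_lid inverse_nonzero_iff_nonzero)

lemma orthogonal_to_two:
  assumes "ccross x y \<noteq> 0" "cdot x p = 0" "cdot y p = 0"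
  shows "\<exists>m. p = m *s ccross x y"
proof -
  have "ccross (ccross x y) p = 0" using ccross_ccross_left[of x y p] assms by simp
  then have "ccross p (ccross x y) = 0" by (simp add: ccross_antisym[of p])
  then show ?thesis using ccross_eq_0_imp_multiple[OF assms(1)] by blast
qed

lemma common_point_det3:
  assumes "p \<noteq> 0" "cdot x p = 0" "cdot y p = 0" "cdot z p = 0"
  shows "det3 x y z = 0"
proof (cases "ccross x y = 0")
  case True then show ?thesis by (simp add: det3_eq_cdot_ccross cdot_expand)
next
  case False
  then obtain m where m: "p = m *s ccross x y" using orthogonal_to_two assms(2,3) by blast
  with assms(1) have "m \<noteq> 0" by auto
  with m assms(4) show ?thesis by (simp add: det3_eq_cdot_ccross)
qed

text \<open>The line joining a point \<open>q\<close> of the line \<open>g\<close> to the point where \<open>g\<close> meets another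
  line \<open>e\<close> is \<open>g\<close> itself, up to a scalar.\<close>
lemma ccross_recovers_line:
  assumes "cdot q g = 0" shows "ccross q (ccross g e) = cdot q e *s g"
  by (simp add: ccross_ccross_right assms)

lemma exists_cdot_nonzero: assumes "q \<noteq> 0" shows "\<exists>e. cdot q e \<noteq> 0"
proof -
  obtain r where "q $ r \<noteq> 0" using assms by (auto simp: vec_eq_iff)
  moreover have "cdot q (axis r 1) = q $ r"
    by (simp add: cdot_def axis_def if_distrib sum.delta cong: if_cong)
  ultimately show ?thesis by metis
qed

lemma det3_eq_0_swap:
  "det3 b a c = 0 \<longleftrightarrow> det3 a b c = 0" "det3 a c b = 0 \<longleftrightarrow> det3 a b c = 0"
  by (metis det3_swap(1) neg_equal_0_iff_equal, metis det3_swap(2) neg_equal_0_iff_equal)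

lemma proportional_cdot_zero: "proportional u w \<Longrightarrow> cdot h u = 0 \<Longrightarrow> cdot h w = 0"
  unfolding proportional_def by auto

lemma proj_pt_eq_imp_proportional:
  assumes "proj_pt u = proj_pt v" shows "proportional u v"
proof -
  have "u \<in> proj_pt u" unfolding proj_pt_def by (rule CollectI, rule exI[of _ 1]) simp
  then have "u \<in> proj_pt v" using assms by simp
  then obtain c where "u = c *s v" "c \<noteq> 0" unfolding proj_pt_def by blast
  then show ?thesis unfolding proportional_def by blast
qed

lemma arrangement_ccross_nonzero:
  assumes "arrangement n X" "i < n" "j < n" "i \<noteq> j" shows "ccross (X i) (X j) \<noteq> 0"
  using assms ccross_eq_0_iff_proportional[of "X i" "X j"] unfolding arrangement_def by blast

lemma realization_arrangement: "G \<in> realization_space n I \<Longrightarrow> arrangement n G"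
  by (simp add: realization_space_def proj_tuples_def arrangement_def)

lemma realization_det3:
  "G \<in> realization_space n I \<Longrightarrow> i < n \<Longrightarrow> j < n \<Longrightarrow> k < n \<Longrightarrow> i \<noteq> j \<Longrightarrow> j \<noteq> k \<Longrightarrow> i \<noteq> k
    \<Longrightarrow> det3 (G i) (G j) (G k) = 0 \<longleftrightarrow> {i, j, k} \<in> I"
  by (simp add: realization_space_def)

lemma det3_scale: "det3 (a *s x) (b *s y) (c *s z) = (a * b * c) * det3 x y z"
  by (simp add: det3_eq_cdot_ccross)

definition nz_coord :: "complex^3 \<Rightarrow> 3" where
  "nz_coord q = (SOME r. q $ r \<noteq> 0)"

lemma nz_coord: "q \<noteq> 0 \<Longrightarrow> q $ nz_coord q \<noteq> 0"
  unfolding nz_coord_def by (rule someI_ex) (auto simp: vec_eq_iff)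

definition polyvec :: "nat \<Rightarrow> ((nat \<Rightarrow> complex^3) \<Rightarrow> complex^3) \<Rightarrow> bool" where
  "polyvec n F \<longleftrightarrow> (\<forall>r. (\<lambda>v. F v $ r) \<in> polyfun n)"

lemma polyfun_diff:
  assumes "f \<in> polyfun n" "g \<in> polyfun n" shows "(\<lambda>v. f v - g v) \<in> polyfun n"
proof -
  have "(\<lambda>v. f v + (-1) * g v) \<in> polyfun n"
    by (intro polyfun.add polyfun.mult polyfun.const assms)
  then show ?thesis by simp
qed

lemma polyfun_prod:
  "finite A \<Longrightarrow> (\<And>a. a \<in> A \<Longrightarrow> F a \<in> polyfun n) \<Longrightarrow> (\<lambda>v. \<Prod>a\<in>A. F a v) \<in> polyfun n"
proof (induction A rule: finite_induct)
  case empty then show ?case by (simp add: polyfun.const)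
next
  case (insert x A)
  then have "(\<lambda>v. F x v * (\<Prod>a\<in>A. F a v)) \<in> polyfun n" by (intro polyfun.mult) auto
  with insert show ?case by simp
qed

lemma polyvec_const: "polyvec n (\<lambda>v. c)"
  by (simp add: polyvec_def polyfun.const)

lemma polyvec_coord: "i < n \<Longrightarrow> polyvec n (\<lambda>v. v i)"
  by (simp add: polyvec_def polyfun.coord)

lemma polyvec_ccross:
  assumes "polyvec n X" "polyvec n Y" shows "polyvec n (\<lambda>v. ccross (X v) (Y v))"
  unfolding polyvec_def
proof
  fix r :: 3
  have "r = 1 \<or> r = 2 \<or> r = 3" by (rule exhaust_3)
  with assms show "(\<lambda>v. ccross (X v) (Y v) $ r) \<in> polyfun n"
    unfolding polyvec_def by (elim disjE) (simp_all add: polyfun_diff polyfun.mult)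
qed

lemma polyfun_cdot:
  assumes "polyvec n X" "polyvec n Y" shows "(\<lambda>v. cdot (X v) (Y v)) \<in> polyfun n"
  using assms unfolding cdot_expand polyvec_def by (intro polyfun.add polyfun.mult) auto

lemma polyfun_compose:
  assumes "f \<in> polyfun m" and "\<And>i. i < m \<Longrightarrow> polyvec n (\<lambda>v. \<Phi> v i)"
  shows "(\<lambda>v. f (\<Phi> v)) \<in> polyfun n"
  using assms(1)
proof (induction rule: polyfun.induct)
  case (coord i r) then show ?case using assms(2) by (simp add: polyvec_def)
next
  case (add f g) then show ?case by (simp add: polyfun.add)
next
  case (mult f g) then show ?case by (simp add: polyfun.mult)
qed (rule polyfun.const)

lemma polyfun_along_line:
  "f \<in> polyfun n \<Longrightarrow> \<exists>q. \<forall>t. f (\<lambda>i. x i + t *s (y i - x i)) = poly q t"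
proof (induction rule: polyfun.induct)
  case (const c) show ?case by (intro exI[of _ "[:c:]"]) simp
next
  case (coord i r) show ?case
    by (intro exI[of _ "[:x i $ r, y i $ r - x i $ r:]"]) (simp add: algebra_simps)
next
  case (add f g)
  then obtain p q where "\<forall>t. f (\<lambda>i. x i + t *s (y i - x i)) = poly p t"
    "\<forall>t. g (\<lambda>i. x i + t *s (y i - x i)) = poly q t" by blast
  then show ?case by (intro exI[of _ "p + q"]) simp
next
  case (mult f g)
  then obtain p q where "\<forall>t. f (\<lambda>i. x i + t *s (y i - x i)) = poly p t"
    "\<forall>t. g (\<lambda>i. x i + t *s (y i - x i)) = poly q t" by blast
  then show ?case by (intro exI[of _ "p * q"]) simp
qed

text \<open>The ring of polynomial functions has no zero divisors: restrict to the line
  through two points where the factors do not vanish.\<close>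
lemma polyfun_no_zero_divisors:
  assumes "f \<in> polyfun n" "g \<in> polyfun n" "f x \<noteq> 0" "g y \<noteq> 0"
  shows "\<exists>z. f z * g z \<noteq> 0"
proof -
  obtain p where p: "\<forall>t. f (\<lambda>i. x i + t *s (y i - x i)) = poly p t"
    using polyfun_along_line[OF assms(1)] by blast
  obtain q where q: "\<forall>t. g (\<lambda>i. x i + t *s (y i - x i)) = poly q t"
    using polyfun_along_line[OF assms(2)] by blast
  have "poly p 0 \<noteq> 0" using p[rule_format, of 0] assms(3) by simp
  moreover have "poly q 1 \<noteq> 0" using q[rule_format, of 1] assms(4) by simp
  ultimately have "p * q \<noteq> 0" by auto
  then have "finite {t. poly (p * q) t = 0}" by (rule poly_roots_finite)
  then obtain t where "t \<notin> {t. poly (p * q) t = 0}"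
    using infinite_UNIV_char_0[where 'a=complex] by (metis UNIV_I ex_new_if_finite)
  then have "f (\<lambda>i. x i + t *s (y i - x i)) * g (\<lambda>i. x i + t *s (y i - x i)) \<noteq> 0"
    using p q by simp
  then show ?thesis by blast
qed

lemma separating_multihom:
  assumes "zariski_closed n Z" "G \<in> proj_tuples n" "G \<notin> Z"
  obtains f where "multihom n f" "f G \<noteq> 0" "\<forall>G'\<in>Z. f G' = 0"
  using assms unfolding zariski_closed_def by blast

lemma multihom_rescale_nonzero:
  assumes "multihom n f" "f G \<noteq> 0" "\<forall>i<n. c i \<noteq> 0"
  shows "f (\<lambda>i. c i *s G i) \<noteq> 0"
proof -
  obtain d where "\<forall>G (c :: nat \<Rightarrow> complex). f (\<lambda>i. c i *s G i) = (\<Prod>i<n. c i ^ d i) * f G"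
    using assms(1) unfolding multihom_def by blast
  with assms(2,3) show ?thesis by simp
qed

text \<open>Two polynomials
  cutting out a decomposition would pull back to polynomials whose product with \<open>P\<close> is
  nonzero somewhere, since polynomial functions form a domain.\<close>
lemma zariski_irreducible_by_parametrization:
  fixes \<Phi> :: "(nat \<Rightarrow> complex^3) \<Rightarrow> nat \<Rightarrow> complex^3"
  assumes sub: "X \<subseteq> proj_tuples n"
    and poly: "\<And>i. i < n \<Longrightarrow> polyvec n (\<lambda>v. \<Phi> v i)"
    and P: "P \<in> polyfun n" "P u \<noteq> 0" "\<And>v. P v \<noteq> 0 \<Longrightarrow> \<Phi> v \<in> X"
    and cover: "\<And>G. G \<in> X \<Longrightarrow> \<exists>v c. (\<forall>i<n. c i \<noteq> 0) \<and> \<Phi> v = (\<lambda>i. c i *s G i)"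
  shows "zariski_irreducible n X"
  unfolding zariski_irreducible_def
proof (intro conjI allI impI)
  show "X \<noteq> {}" using P(2,3) by blast
next
  fix Z1 Z2 assume Z: "zariski_closed n Z1 \<and> zariski_closed n Z2 \<and> X \<subseteq> Z1 \<union> Z2"
  have pulled_back: "\<exists>f. (\<lambda>v. f (\<Phi> v)) \<in> polyfun n \<and> (\<exists>v. f (\<Phi> v) \<noteq> 0) \<and> (\<forall>G'\<in>Z. f G' = 0)"
    if closed: "zariski_closed n Z" and G: "G \<in> X" "G \<notin> Z" for Z G
  proof -
    obtain f where f: "multihom n f" "f G \<noteq> 0" "\<forall>G'\<in>Z. f G' = 0"
      by (rule separating_multihom[OF closed subsetD[OF sub G(1)] G(2)])
    obtain v c where c: "\<forall>i<n. c i \<noteq> 0" and v: "\<Phi> v = (\<lambda>i. c i *s G i)"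
      using cover[OF G(1)] by blast
    have "f (\<Phi> v) \<noteq> 0" unfolding v by (rule multihom_rescale_nonzero[OF f(1,2) c])
    moreover have "(\<lambda>v. f (\<Phi> v)) \<in> polyfun n"
      using f(1) poly[rule_format] unfolding multihom_def by (blast intro: polyfun_compose)
    ultimately show ?thesis using f(3) by blast
  qed
  show "X \<subseteq> Z1 \<or> X \<subseteq> Z2"
  proof (rule ccontr)
    assume "\<not> (X \<subseteq> Z1 \<or> X \<subseteq> Z2)"
    then obtain G1 G2 where G: "G1 \<in> X" "G1 \<notin> Z1" "G2 \<in> X" "G2 \<notin> Z2" by blast
    obtain f where
      f: "(\<lambda>v. f (\<Phi> v)) \<in> polyfun n" "\<exists>v. f (\<Phi> v) \<noteq> 0" "\<forall>G'\<in>Z1. f G' = 0"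
      using pulled_back[of Z1 G1] Z G by blast
    obtain g where
      g: "(\<lambda>v. g (\<Phi> v)) \<in> polyfun n" "\<exists>v. g (\<Phi> v) \<noteq> 0" "\<forall>G'\<in>Z2. g G' = 0"
      using pulled_back[of Z2 G2] Z G by blast
    obtain x y where "f (\<Phi> x) \<noteq> 0" "g (\<Phi> y) \<noteq> 0" using f(2) g(2) by blast
    then obtain z1 where "f (\<Phi> z1) * g (\<Phi> z1) \<noteq> 0"
      using polyfun_no_zero_divisors[OF f(1) g(1)] by blast
    then obtain z where z: "f (\<Phi> z) * g (\<Phi> z) * P z \<noteq> 0"
      using polyfun_no_zero_divisors[OF polyfun.mult[OF f(1) g(1)] P(1), of z1 u] P(2) by blast
    then have "\<Phi> z \<in> X" using P(3) by simp
    then have "\<Phi> z \<in> Z1 \<or> \<Phi> z \<in> Z2" using Z by blast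
    then show False using z f(3) g(3) by force
  qed
qed

lemma mult_pts_mono:
  assumes "S \<subseteq> T" "finite T" shows "mult_pts S H \<subseteq> mult_pts T H"
proof
  fix x assume "x \<in> mult_pts S H"
  then obtain p where p: "x = proj_pt p" "p \<noteq> 0" "3 \<le> card {i \<in> S. on_line p (H i)}"
    unfolding mult_pts_def by blast
  have "card {i \<in> S. on_line p (H i)} \<le> card {i \<in> T. on_line p (H i)}"
    using assms by (intro card_mono) auto
  with p show "x \<in> mult_pts T H" unfolding mult_pts_def by force
qed

lemma at_most_two_subset: "at_most_two Y \<Longrightarrow> X \<subseteq> Y \<Longrightarrow> at_most_two X"
  unfolding at_most_two_def by (meson card_mono order_trans finite_subset)

text \<open>The given numbering already witnesses inductive connectedness: the multiple points
  of the first \<open>t\<close> lines are multiple points of the whole arrangement.\<close>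
lemma inductively_connected_if_few_mult:
  assumes "\<forall>i<n. at_most_two (mult_pts {..<n} H \<inter> line_pts (H i))"
  shows "inductively_connected n H"
  unfolding inductively_connected_def
proof (intro exI[of _ id] conjI ballI)
  show "bij_betw id {..<n} {..<n}" by simp
next
  fix t assume t: "t \<in> {1..n}"
  then have "mult_pts {..<t} H \<subseteq> mult_pts {..<n} H" by (intro mult_pts_mono) auto
  then have "line_pts (H (t - 1)) \<inter> mult_pts {..<t} H \<subseteq> mult_pts {..<n} H \<inter> line_pts (H (t - 1))"
    by blast
  moreover have "at_most_two (mult_pts {..<n} H \<inter> line_pts (H (t - 1)))" using assms t by auto
  ultimately show "at_most_two (line_pts (H (id (t - 1))) \<inter> mult_pts (id ` {..<t}) H)"
    by (simp only: id_apply image_id) (rule at_most_two_subset)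
qed

definition meet :: "(nat \<Rightarrow> complex^3) \<Rightarrow> nat \<times> nat \<Rightarrow> complex^3" where
  "meet X p = ccross (X (fst p)) (X (snd p))"

lemma meet_pair [simp]: "meet X (a, b) = ccross (X a) (X b)"
  by (simp add: meet_def)

text \<open>How line \<open>t\<close> is constrained by the multiple points that the earlier lines create on
  it: not at all, to pass through one given point, or to pass through two given points.\<close>
datatype placement = Free | Through "nat \<times> nat" | Fixed "nat \<times> nat" "nat \<times> nat"

locale few_mult_arrangement =
  fixes n :: nat and H :: "nat \<Rightarrow> complex^3"
  assumes arrangement: "arrangement n H"
    and few_mult: "\<forall>i<n. at_most_two (mult_pts {..<n} H \<inter> line_pts (H i))"
begin

abbreviation R :: "(nat \<Rightarrow> complex^3) set" where
  "R \<equiv> realization_space n (incidence n H)"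

definition concurrent :: "nat \<Rightarrow> nat \<Rightarrow> nat \<Rightarrow> bool" where
  "concurrent i j k \<longleftrightarrow> (\<exists>p. p \<noteq> 0 \<and> on_line p (H i) \<and> on_line p (H j) \<and> on_line p (H k))"

lemma concurrent_commute:
  "concurrent j i k \<longleftrightarrow> concurrent i j k" "concurrent i k j \<longleftrightarrow> concurrent i j k"
  unfolding concurrent_def by blast+

lemma meet_H_nonzero: "a < n \<Longrightarrow> b < n \<Longrightarrow> a \<noteq> b \<Longrightarrow> meet H (a, b) \<noteq> 0"
  using arrangement_ccross_nonzero[OF arrangement] by simp

lemma concurrent_iff_meet:
  assumes "a < n" "b < n" "a \<noteq> b"
  shows "concurrent a b k \<longleftrightarrow> cdot (H k) (meet H (a, b)) = 0"
proof
  assume "concurrent a b k"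
  then obtain p where p: "p \<noteq> 0" "cdot (H a) p = 0" "cdot (H b) p = 0" "cdot (H k) p = 0"
    by (auto simp: concurrent_def on_line_iff_cdot)
  obtain m where "p = m *s meet H (a, b)"
    using orthogonal_to_two[OF meet_H_nonzero[OF assms, simplified] p(2,3)] by auto
  with p(1,4) show "cdot (H k) (meet H (a, b)) = 0" by (cases "m = 0") auto
next
  assume "cdot (H k) (meet H (a, b)) = 0"
  with meet_H_nonzero[OF assms] show "concurrent a b k"
    unfolding concurrent_def on_line_iff_cdot by (intro exI[of _ "meet H (a, b)"]) simp
qed

lemma incidence_iff_concurrent:
  assumes "i < n" "j < n" "k < n" "i \<noteq> j" "j \<noteq> k" "i \<noteq> k"
  shows "{i, j, k} \<in> incidence n H \<longleftrightarrow> concurrent i j k"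
proof
  assume "{i, j, k} \<in> incidence n H"
  then obtain i' j' k' p where e: "{i, j, k} = {i', j', k'}" "p \<noteq> 0"
    "on_line p (H i')" "on_line p (H j')" "on_line p (H k')"
    unfolding incidence_def by blast
  then have "\<forall>x\<in>{i, j, k}. on_line p (H x)" by auto
  with e(2) show "concurrent i j k" unfolding concurrent_def by blast
qed (use assms in \<open>auto simp: incidence_def concurrent_def\<close>)

lemma H_det3_iff_incidence:
  assumes "i < n" "j < n" "k < n" "i \<noteq> j" "j \<noteq> k" "i \<noteq> k"
  shows "det3 (H i) (H j) (H k) = 0 \<longleftrightarrow> {i, j, k} \<in> incidence n H"
  using concurrent_iff_meet[of i j k] incidence_iff_concurrent[OF assms] assms
  by (simp add: det3_eq_cdot_ccross)

lemma H_in_realization: "(\<lambda>i. if i < n then H i else 0) \<in> R"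
  using arrangement H_det3_iff_incidence
  unfolding realization_space_def proj_tuples_def arrangement_def by auto

definition earlier_pairs :: "nat \<Rightarrow> (nat \<times> nat) set" where
  "earlier_pairs t = {(a, b). a < b \<and> b < t \<and> concurrent a b t}"

lemma earlier_pairsD: "(a, b) \<in> earlier_pairs t \<Longrightarrow> a < b \<and> b < t \<and> concurrent a b t"
  by (simp add: earlier_pairs_def)

lemma meet_in_mult_pts:
  assumes "(a, b) \<in> earlier_pairs t" "t < n"
  shows "proj_pt (meet H (a, b)) \<in> mult_pts {..<n} H \<inter> line_pts (H t)"
proof -
  have ab: "a < b" "b < t" "concurrent a b t" using earlier_pairsD[OF assms(1)] by auto
  have nz: "meet H (a, b) \<noteq> 0" using ab assms(2) by (intro meet_H_nonzero) auto
  have on_t: "on_line (meet H (a, b)) (H t)"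
    using ab assms(2) concurrent_iff_meet[of a b t] by (simp add: on_line_iff_cdot)
  have "{a, b, t} \<subseteq> {i \<in> {..<n}. on_line (meet H (a, b)) (H i)}"
    using ab assms(2) on_t by (auto simp: on_line_iff_cdot)
  then have "card {a, b, t} \<le> card {i \<in> {..<n}. on_line (meet H (a, b)) (H i)}"
    by (intro card_mono) auto
  moreover have "card {a, b, t} = 3" using ab by auto
  ultimately show ?thesis
    using nz on_t unfolding mult_pts_def line_pts_def by force
qed

definition placement_ok :: "nat \<Rightarrow> placement \<Rightarrow> bool" where
  "placement_ok t pl = (case pl of
      Free \<Rightarrow> earlier_pairs t = {}
    | Through p \<Rightarrow> p \<in> earlier_pairs t \<and>
        (\<forall>r\<in>earlier_pairs t. proportional (meet H r) (meet H p))
    | Fixed p q \<Rightarrow> p \<in> earlier_pairs t \<and> q \<in> earlier_pairs t \<and>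
        \<not> proportional (meet H p) (meet H q) \<and>
        (\<forall>r\<in>earlier_pairs t. proportional (meet H r) (meet H p) \<or> proportional (meet H r) (meet H q)))"

text \<open>The hypothesis is used exactly here: the intersection points of earlier lines on line
  \<open>t\<close> represent at most two projective points.\<close>
lemma placement_exists: assumes "t < n" shows "\<exists>pl. placement_ok t pl"
proof (rule ccontr)
  assume none: "\<not> (\<exists>pl. placement_ok t pl)"
  then have "\<not> placement_ok t Free" by blast
  then obtain p where p: "p \<in> earlier_pairs t" by (auto simp: placement_ok_def)
  from none have "\<not> placement_ok t (Through p)" by blast
  then obtain q where q: "q \<in> earlier_pairs t" "\<not> proportional (meet H q) (meet H p)"
    using p by (auto simp: placement_ok_def)
  from none have "\<not> placement_ok t (Fixed p q)" by blast
  moreover have "\<not> proportional (meet H p) (meet H q)" using q(2) proportional_sym by blast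
  ultimately obtain r where r: "r \<in> earlier_pairs t"
    "\<not> proportional (meet H r) (meet H p)" "\<not> proportional (meet H r) (meet H q)"
    using p q(1) by (auto simp: placement_ok_def)
  let ?M = "mult_pts {..<n} H \<inter> line_pts (H t)"
  let ?pts = "{proj_pt (meet H p), proj_pt (meet H q), proj_pt (meet H r)}"
  have M: "finite ?M" "card ?M \<le> 2" using few_mult assms unfolding at_most_two_def by blast+
  have in_M: "proj_pt (meet H x) \<in> ?M" if "x \<in> earlier_pairs t" for x
  proof -
    obtain a b where x: "x = (a, b)" by fastforce
    show ?thesis using meet_in_mult_pts[of a b t] that assms unfolding x by (simp only:)
  qed
  have "?pts \<subseteq> ?M" using in_M p q(1) r(1) by blast
  moreover have "proj_pt (meet H q) \<noteq> proj_pt (meet H p)" "proj_pt (meet H r) \<noteq> proj_pt (meet H p)"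
    "proj_pt (meet H r) \<noteq> proj_pt (meet H q)"
    using q(2) r(2,3) proj_pt_eq_imp_proportional by blast+
  then have "card ?pts = 3" by auto
  ultimately have "3 \<le> card ?M" using card_mono[OF M(1)] by metis
  with M(2) show False by simp
qed

definition placement :: "nat \<Rightarrow> placement" where
  "placement t = (SOME pl. placement_ok t pl)"

lemma placement_cases:
  assumes "t < n"
  obtains (Free) "placement t = Free" "earlier_pairs t = {}"
  | (Through) a b where "placement t = Through (a, b)" "(a, b) \<in> earlier_pairs t"
      "\<forall>r\<in>earlier_pairs t. proportional (meet H r) (meet H (a, b))"
  | (Fixed) a b a' b' where "placement t = Fixed (a, b) (a', b')"
      "(a, b) \<in> earlier_pairs t" "(a', b') \<in> earlier_pairs t"
      "\<not> proportional (meet H (a, b)) (meet H (a', b'))"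
      "\<forall>r\<in>earlier_pairs t. proportional (meet H r) (meet H (a, b)) \<or>
          proportional (meet H r) (meet H (a', b'))"
proof -
  have "placement_ok t (placement t)"
    unfolding placement_def using placement_exists[OF assms] by (rule someI_ex)
  then show ?thesis using that
    by (cases "placement t") (auto simp: placement_ok_def simp del: meet_pair)
qed

definition next_line :: "(nat \<Rightarrow> complex^3) \<Rightarrow> complex^3 \<Rightarrow> nat \<Rightarrow> complex^3" where
  "next_line X e t = (case placement t of
      Free \<Rightarrow> e
    | Through p \<Rightarrow> ccross (meet X p) e
    | Fixed p q \<Rightarrow> ccross (meet X p) (meet X q))"

primrec param :: "nat \<Rightarrow> (nat \<Rightarrow> complex^3) \<Rightarrow> nat \<Rightarrow> complex^3" where
  "param 0 w = (\<lambda>_. 0)"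
| "param (Suc t) w = (param t w)(t := next_line (param t w) (w t) t)"

lemma param_beyond: "t \<le> s \<Longrightarrow> param t w s = 0"
  by (induction t) auto

lemma param_stable: "s < t \<Longrightarrow> param t w s = param (Suc s) w s"
proof (induction t)
  case (Suc t) then show ?case by (cases "s = t") (simp_all del: param.simps(2), simp)
qed simp

lemma param_earlier_only: "\<forall>s<t. w s = w' s \<Longrightarrow> param t w = param t w'"
proof (induction t)
  case (Suc t)
  then have "param t w = param t w'" "w t = w' t" by simp_all
  then show ?case by simp
qed simp

lemma next_line_local:
  assumes "t < n" "\<forall>s<t. X s = Y s" shows "next_line X e t = next_line Y e t"
  using assms(1)
proof (cases rule: placement_cases)
  case Free then show ?thesis by (simp add: next_line_def)
next
  case (Through a b)
  then show ?thesis using earlier_pairsD[OF Through(2)] assms(2) by (simp add: next_line_def)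
next
  case (Fixed a b a' b')
  then show ?thesis using earlier_pairsD[OF Fixed(2)] earlier_pairsD[OF Fixed(3)] assms(2)
    by (simp add: next_line_def)
qed

lemma param_next_line: assumes "t < n" shows "param n w t = next_line (param n w) (w t) t"
proof -
  have "param n w t = next_line (param t w) (w t) t" using param_stable[OF assms] by simp
  also have "\<dots> = next_line (param n w) (w t) t"
    using param_stable assms by (intro next_line_local) (auto dest: order.strict_trans)
  finally show ?thesis .
qed

lemma param_update_later:
  assumes "s < t" "s < n" shows "param n (w(t := e)) s = param n w s"
proof -
  have "param (Suc s) (w(t := e)) = param (Suc s) w"
    by (rule param_earlier_only) (use assms(1) in auto)
  then show ?thesis using param_stable[OF assms(2)] by metis
qed

lemma polyvec_param: "t \<le> n \<Longrightarrow> polyvec n (\<lambda>v. param t v i)"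
proof (induction t arbitrary: i)
  case 0 then show ?case by (simp add: polyvec_const)
next
  case (Suc t)
  then have IH: "\<And>j. polyvec n (\<lambda>v. param t v j)" and t: "t < n" by simp_all
  have "polyvec n (\<lambda>v. next_line (param t v) (v t) t)"
    unfolding next_line_def meet_def
    by (cases "placement t") (simp_all add: IH polyvec_ccross polyvec_coord[OF t])
  with IH show ?case by (cases "i = t") simp_all
qed

text \<open>If earlier lines \<open>x, y\<close> meet on line \<open>k\<close>, their intersection point is (up to scaling)
  the meet of a pair prescribed by the placement of \<open>k\<close>, and every parametrized line \<open>k\<close>
  passes through the parametrized version of that meet.\<close>
lemma param_through_meet:
  assumes "k < n" "x < k" "y < k" "x \<noteq> y" "concurrent x y k"
  obtains a b where "(a, b) \<in> earlier_pairs k"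
    "cdot (H x) (meet H (a, b)) = 0" "cdot (H y) (meet H (a, b)) = 0"
    "cdot (param n v k) (meet (param n v) (a, b)) = 0"
proof -
  note result = that
  define a0 b0 where "a0 = min x y" and "b0 = max x y"
  have "concurrent a0 b0 k"
    using assms(5) concurrent_commute(1) unfolding a0_def b0_def by (cases "x \<le> y") auto
  then have p0: "(a0, b0) \<in> earlier_pairs k"
    using assms(2-4) unfolding earlier_pairs_def a0_def b0_def by auto
  have on_xy: "cdot (H x) (meet H (a0, b0)) = 0" "cdot (H y) (meet H (a0, b0)) = 0"
    unfolding a0_def b0_def by (cases "x \<le> y"; simp add: min_def max_def)+
  have through: "thesis" if "(a, b) \<in> earlier_pairs k"
    "proportional (meet H (a0, b0)) (meet H (a, b))"
    "param n v k = ccross (meet (param n v) (a, b)) u" for a b u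
  proof (rule result[OF that(1)])
    show "cdot (param n v k) (meet (param n v) (a, b)) = 0" using that(3) by simp
  qed (use proportional_cdot_zero[OF that(2)] on_xy in auto)
  from assms(1) show thesis
  proof (cases rule: placement_cases)
    case Free then show ?thesis using p0 by auto
  next
    case (Through a b)
    then show ?thesis using p0 param_next_line[OF assms(1)]
      by (intro through[of a b]) (auto simp: next_line_def simp del: meet_pair)
  next
    case (Fixed a b a' b')
    then consider "proportional (meet H (a0, b0)) (meet H (a, b))"
      | "proportional (meet H (a0, b0)) (meet H (a', b'))" using p0 by blast
    then show ?thesis
    proof cases
      case 1 then show ?thesis using Fixed param_next_line[OF assms(1)]
        by (intro through[of a b]) (auto simp: next_line_def simp del: meet_pair)
    next
      case 2
      have "param n v k = ccross (meet (param n v) (a', b')) (- meet (param n v) (a, b))"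
        using Fixed param_next_line[OF assms(1)]
        by (simp add: next_line_def ccross_swap_neg[of "meet (param n v) (a, b)"] del: meet_pair)
      then show ?thesis using 2 Fixed by (intro through[of a' b']) simp_all
    qed
  qed
qed

lemma param_concurrence_step:
  fixes v X defines "X \<equiv> param n v"
  assumes arr: "arrangement n X" and "k < n" "x < k" "y < k" "x \<noteq> y" "concurrent x y k"
    and earlier: "\<And>a b c. a < k \<Longrightarrow> b < k \<Longrightarrow> c < k \<Longrightarrow> a \<noteq> b \<Longrightarrow> b \<noteq> c \<Longrightarrow> a \<noteq> c
       \<Longrightarrow> concurrent a b c \<Longrightarrow> det3 (X a) (X b) (X c) = 0"
  shows "det3 (X x) (X y) (X k) = 0"
proof -
  obtain a b where ab: "(a, b) \<in> earlier_pairs k" "cdot (H x) (meet H (a, b)) = 0"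
     "cdot (H y) (meet H (a, b)) = 0" "cdot (X k) (meet X (a, b)) = 0"
    using param_through_meet[OF assms(3-7)] unfolding X_def by blast
  have abk: "a < b" "b < k" using earlier_pairsD[OF ab(1)] by auto
  have nz: "meet X (a, b) \<noteq> 0"
    using arrangement_ccross_nonzero[OF arr] abk assms(3) by simp
  have on: "cdot (X z) (meet X (a, b)) = 0" if "z < k" "cdot (H z) (meet H (a, b)) = 0" for z
  proof (cases "z = a \<or> z = b")
    case True then show ?thesis by auto
  next
    case False
    have "concurrent a b z" using concurrent_iff_meet[of a b z] abk assms(3) that by simp
    then have "det3 (X a) (X b) (X z) = 0" using earlier abk that False by simp
    then show ?thesis by (simp add: det3_eq_cdot_ccross)
  qed
  show ?thesis
    using common_point_det3[OF nz on[OF assms(4) ab(2)] on[OF assms(5) ab(3)] ab(4)] .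
qed

lemma param_concurrences:
  fixes v X defines "X \<equiv> param n v"
  assumes arr: "arrangement n X"
  shows "k \<le> n \<Longrightarrow> x < k \<Longrightarrow> y < k \<Longrightarrow> z < k \<Longrightarrow> x \<noteq> y \<Longrightarrow> y \<noteq> z \<Longrightarrow> x \<noteq> z
    \<Longrightarrow> concurrent x y z \<Longrightarrow> det3 (X x) (X y) (X z) = 0"
proof (induction k arbitrary: x y z)
  case 0 then show ?case by simp
next
  case (Suc k)
  note step = param_concurrence_step[OF arr[unfolded X_def], folded X_def]
  have k: "k < n" using Suc.prems(1) by simp
  have earlier: "\<And>a b c. a < k \<Longrightarrow> b < k \<Longrightarrow> c < k \<Longrightarrow> a \<noteq> b \<Longrightarrow> b \<noteq> c \<Longrightarrow> a \<noteq> c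
       \<Longrightarrow> concurrent a b c \<Longrightarrow> det3 (X a) (X b) (X c) = 0"
    using Suc.IH Suc.prems(1) by simp
  consider "z = k" | "y = k" | "x = k" | "x < k" "y < k" "z < k" using Suc.prems(2-4) by linarith
  then show ?case
  proof cases
    case 1 then show ?thesis using step[OF k _ _ _ _ earlier] Suc.prems by simp
  next
    case 2
    then have "det3 (X x) (X z) (X y) = 0"
      using step[OF k _ _ _ _ earlier, of x z] Suc.prems concurrent_commute(2) by simp
    then show ?thesis by (simp add: det3_eq_0_swap)
  next
    case 3
    then have "det3 (X y) (X z) (X x) = 0"
      using step[OF k _ _ _ _ earlier, of y z] Suc.prems concurrent_commute by simp
    then show ?thesis by (simp add: det3_eq_0_swap)
  next
    case 4 then show ?thesis using earlier Suc.prems by simp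
  qed
qed

lemma realization_meet_on_line:
  assumes "G \<in> R" "(a, b) \<in> earlier_pairs t" "t < n"
  shows "cdot (meet G (a, b)) (G t) = 0"
proof -
  have ab: "a < b" "b < t" "concurrent a b t" using earlier_pairsD[OF assms(2)] by auto
  then have "{a, b, t} \<in> incidence n H" using incidence_iff_concurrent[of a b t] assms(3) by simp
  then have "det3 (G a) (G b) (G t) = 0" using realization_det3[OF assms(1)] ab assms(3) by simp
  then show ?thesis by (simp add: det3_eq_cdot_ccross cdot_commute)
qed

text \<open>Two projectively distinct multiple points on line \<open>t\<close> stay distinct in every
  realization, since the realization has the same concurrences as \<open>H\<close>.\<close>
lemma realization_meets_independent:
  assumes G: "G \<in> R" and p: "(a, b) \<in> earlier_pairs t" and q: "(a', b') \<in> earlier_pairs t"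
    and t: "t < n" and np: "\<not> proportional (meet H (a, b)) (meet H (a', b'))"
  shows "ccross (meet G (a, b)) (meet G (a', b')) \<noteq> 0"
proof
  assume dependent: "ccross (meet G (a, b)) (meet G (a', b')) = 0"
  have i: "a < b" "b < t" "a' < b'" "b' < t" using earlier_pairsD[OF p] earlier_pairsD[OF q] by auto
  have G_nz: "meet G (a', b') \<noteq> 0"
    using arrangement_ccross_nonzero[OF realization_arrangement[OF G]] i t by simp
  obtain \<mu> where \<mu>: "meet G (a, b) = \<mu> *s meet G (a', b')"
    using ccross_eq_0_imp_multiple[OF G_nz dependent] by blast
  have on: "cdot (H z) (meet H (a, b)) = 0" if z: "z = a' \<or> z = b'" for z
  proof (cases "z = a \<or> z = b")
    case True then show ?thesis by auto
  next
    case False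
    have "cdot (G z) (meet G (a, b)) = 0" using \<mu> z by auto
    then have "{a, b, z} \<in> incidence n H"
      using realization_det3[OF G, of a b z] i t z False by (auto simp: det3_eq_cdot_ccross)
    then have "concurrent a b z" using incidence_iff_concurrent[of a b z] i t z False by auto
    then show ?thesis using concurrent_iff_meet[of a b z] i t by simp
  qed
  have "meet H (a', b') \<noteq> 0" using meet_H_nonzero i t by simp
  then obtain m where m: "meet H (a, b) = m *s meet H (a', b')"
    using orthogonal_to_two[of "H a'" "H b'" "meet H (a, b)"] on[of a'] on[of b'] by auto
  moreover have "m \<noteq> 0" using m meet_H_nonzero[of a b] i t by auto
  ultimately show False using np unfolding proportional_def by blast
qed

lemma next_line_realizes:
  assumes G: "G \<in> R" and t: "t < n" and X: "\<forall>s<t. c s \<noteq> 0 \<and> X s = c s *s G s"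
  shows "\<exists>e c'. c' \<noteq> 0 \<and> next_line X e t = c' *s G t"
  using t
proof (cases rule: placement_cases)
  case Free then show ?thesis by (intro exI[of _ "G t"] exI[of _ 1]) (simp add: next_line_def)
next
  case (Through a b)
  have ab: "a < b" "b < t" using earlier_pairsD[OF Through(2)] by auto
  have XG: "meet X (a, b) = (c a * c b) *s meet G (a, b)" using X ab by simp
  have "meet G (a, b) \<noteq> 0"
    using arrangement_ccross_nonzero[OF realization_arrangement[OF G]] ab t by simp
  then obtain e0 where e0: "cdot (meet G (a, b)) e0 \<noteq> 0" using exists_cdot_nonzero by blast
  have "next_line X (ccross (G t) e0) t = (c a * c b * cdot (meet G (a, b)) e0) *s G t"
    using Through(1) XG ccross_recovers_line[OF realization_meet_on_line[OF G Through(2) t]]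
    by (simp add: next_line_def del: meet_pair)
  moreover have "c a * c b * cdot (meet G (a, b)) e0 \<noteq> 0" using X ab e0 by auto
  ultimately show ?thesis by blast
next
  case (Fixed a b a' b')
  have ab: "a < b" "b < t" "a' < b'" "b' < t"
    using earlier_pairsD[OF Fixed(2)] earlier_pairsD[OF Fixed(3)] by auto
  have indep: "ccross (meet G (a, b)) (meet G (a', b')) \<noteq> 0"
    using realization_meets_independent[OF G Fixed(2,3) t Fixed(4)] .
  obtain m where m: "G t = m *s ccross (meet G (a, b)) (meet G (a', b'))"
    using orthogonal_to_two[OF indep realization_meet_on_line[OF G Fixed(2) t]
        realization_meet_on_line[OF G Fixed(3) t]] by blast
  have "m \<noteq> 0" using m realization_arrangement[OF G] t by (auto simp: arrangement_def)
  define d where "d = c a * c b * (c a' * c b')"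
  have "next_line X 0 t = d *s ccross (meet G (a, b)) (meet G (a', b'))"
    using Fixed(1) X ab by (simp add: next_line_def d_def)
  also have "\<dots> = (d / m) *s G t" using m \<open>m \<noteq> 0\<close> by simp
  finally have "next_line X 0 t = (d / m) *s G t" .
  moreover have "d / m \<noteq> 0" using X ab \<open>m \<noteq> 0\<close> by (simp add: d_def)
  ultimately show ?thesis by blast
qed

lemma param_covers_realization:
  assumes G: "G \<in> R" shows "\<exists>w c. (\<forall>i<n. c i \<noteq> 0) \<and> param n w = (\<lambda>i. c i *s G i)"
proof -
  have "\<exists>w c. \<forall>s<t. c s \<noteq> 0 \<and> param n w s = c s *s G s" if "t \<le> n" for t
    using that
  proof (induction t)
    case 0 then show ?case by simp
  next
    case (Suc t)
    then obtain w c where wc: "\<forall>s<t. c s \<noteq> 0 \<and> param n w s = c s *s G s" and t: "t < n"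
      by auto
    obtain e c' where e: "c' \<noteq> 0" "next_line (param n w) e t = c' *s G t"
      using next_line_realizes[OF G t wc] by blast
    have old: "param n (w(t := e)) s = param n w s" if "s < t" for s
      using param_update_later that t by simp
    have "param n (w(t := e)) t = next_line (param n (w(t := e))) e t"
      using param_next_line[OF t, of "w(t := e)"] by simp
    also have "\<dots> = next_line (param n w) e t" using old by (intro next_line_local[OF t]) auto
    finally have "\<forall>s<Suc t. (c(t := c')) s \<noteq> 0 \<and> param n (w(t := e)) s = (c(t := c')) s *s G s"
      using wc e old by (auto simp: less_Suc_eq)
    then show ?case by blast
  qed
  then obtain w c where wc: "\<forall>s<n. c s \<noteq> 0 \<and> param n w s = c s *s G s" by blast
  have "param n w = (\<lambda>i. c i *s G i)"
  proof
    fix i show "param n w i = c i *s G i"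
      using wc param_beyond[of n i w] G
      by (cases "i < n") (auto simp: realization_space_def proj_tuples_def)
  qed
  with wc show ?thesis by blast
qed

definition distinct_pairs :: "(nat \<times> nat) set" where
  "distinct_pairs = {(i, j). i < n \<and> j < n \<and> i \<noteq> j}"

definition nonincident_triples :: "(nat \<times> nat \<times> nat) set" where
  "nonincident_triples = {(i, j, k). i < n \<and> j < n \<and> k < n \<and> i \<noteq> j \<and> j \<noteq> k \<and> i \<noteq> k \<and>
     {i, j, k} \<notin> incidence n H}"

lemma finite_distinct_pairs: "finite distinct_pairs"
  by (rule finite_subset[of _ "{..<n} \<times> {..<n}"]) (auto simp: distinct_pairs_def)

lemma finite_nonincident_triples: "finite nonincident_triples"
  by (rule finite_subset[of _ "{..<n} \<times> {..<n} \<times> {..<n}"]) (auto simp: nonincident_triples_def)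

text \<open>Each factor is a coordinate that does not vanish at \<open>H\<close> itself.\<close>
definition nondeg :: "(nat \<Rightarrow> complex^3) \<Rightarrow> complex" where
  "nondeg X = (\<Prod>i<n. X i $ nz_coord (H i)) *
     (\<Prod>(i, j)\<in>distinct_pairs. meet X (i, j) $ nz_coord (meet H (i, j))) *
     (\<Prod>(i, j, k)\<in>nonincident_triples. det3 (X i) (X j) (X k))"

lemma polyfun_nondeg: "nondeg \<in> polyfun n"
proof -
  have vec: "polyvec n (\<lambda>X. X i)" if "i < n" for i using polyvec_coord that .
  have "(\<lambda>X. \<Prod>i<n. X i $ nz_coord (H i)) \<in> polyfun n"
    by (intro polyfun_prod) (auto intro: polyfun.coord)
  moreover have "(\<lambda>X. \<Prod>(i, j)\<in>distinct_pairs. meet X (i, j) $ nz_coord (meet H (i, j))) \<in> polyfun n"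
    using vec by (intro polyfun_prod finite_distinct_pairs)
      (auto simp: distinct_pairs_def polyvec_def intro!: polyvec_ccross[unfolded polyvec_def, rule_format])
  moreover have "(\<lambda>X. \<Prod>(i, j, k)\<in>nonincident_triples. det3 (X i) (X j) (X k)) \<in> polyfun n"
    using vec by (intro polyfun_prod finite_nonincident_triples)
      (auto simp: nonincident_triples_def det3_eq_cdot_ccross intro!: polyfun_cdot polyvec_ccross)
  ultimately show ?thesis
    unfolding nondeg_def[abs_def] by (intro polyfun.mult)
qed

lemma nondeg_nonzeroD:
  assumes "nondeg X \<noteq> 0"
  shows "arrangement n X"
    and "\<And>i j k. (i, j, k) \<in> nonincident_triples \<Longrightarrow> det3 (X i) (X j) (X k) \<noteq> 0"
proof -
  have lines: "X i \<noteq> 0" if "i < n" for i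
  proof -
    have "X i $ nz_coord (H i) \<noteq> 0" using assms that by (auto simp: nondeg_def)
    then show ?thesis by auto
  qed
  have pairs: "ccross (X i) (X j) \<noteq> 0" if "(i, j) \<in> distinct_pairs" for i j
    using assms that finite_distinct_pairs by (fastforce simp: nondeg_def)
  show "arrangement n X"
    unfolding arrangement_def using lines pairs ccross_eq_0_iff_proportional
    by (auto simp: distinct_pairs_def)
  show "det3 (X i) (X j) (X k) \<noteq> 0" if "(i, j, k) \<in> nonincident_triples" for i j k
    using assms that finite_nonincident_triples by (fastforce simp: nondeg_def)
qed

lemma nondeg_rescaled_H:
  assumes "\<forall>i<n. c i \<noteq> 0 \<and> X i = c i *s H i" shows "nondeg X \<noteq> 0"
proof -
  have H_nz: "H i \<noteq> 0" if "i < n" for i using arrangement that by (simp add: arrangement_def)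
  have "X i $ nz_coord (H i) \<noteq> 0" if "i < n" for i
    using assms that nz_coord[OF H_nz[OF that]] by simp
  moreover have "meet X (i, j) $ nz_coord (meet H (i, j)) \<noteq> 0" if "(i, j) \<in> distinct_pairs" for i j
    using assms that nz_coord[OF meet_H_nonzero[of i j]] by (simp add: distinct_pairs_def)
  moreover have "det3 (X i) (X j) (X k) \<noteq> 0" if "(i, j, k) \<in> nonincident_triples" for i j k
    using assms that H_det3_iff_incidence[of i j k]
    by (simp add: nonincident_triples_def det3_scale)
  ultimately show ?thesis
    using finite_distinct_pairs finite_nonincident_triples by (auto simp: nondeg_def)
qed

text \<open>Where \<open>nondeg\<close> does not vanish, the parametrization lands in the realization space:
  the closed conditions (concurrences) hold by construction.\<close>
lemma param_in_realization:
  assumes nz: "nondeg (param n v) \<noteq> 0" shows "param n v \<in> R"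
proof -
  have arr: "arrangement n (param n v)" by (rule nondeg_nonzeroD(1)[OF nz])
  have "det3 (param n v i) (param n v j) (param n v k) = 0 \<longleftrightarrow> {i, j, k} \<in> incidence n H"
    if "i < n" "j < n" "k < n" "i \<noteq> j" "j \<noteq> k" "i \<noteq> k" for i j k
  proof
    assume "det3 (param n v i) (param n v j) (param n v k) = 0"
    then show "{i, j, k} \<in> incidence n H"
      using nondeg_nonzeroD(2)[OF nz, of i j k] that by (auto simp: nonincident_triples_def)
  next
    assume "{i, j, k} \<in> incidence n H"
    then have "concurrent i j k" using incidence_iff_concurrent that by blast
    then show "det3 (param n v i) (param n v j) (param n v k) = 0"
      using param_concurrences[OF arr order_refl] that by blast
  qed
  then show ?thesis
    using arr param_beyond[of n _ v]
    unfolding realization_space_def proj_tuples_def arrangement_def by auto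
qed

theorem realization_irreducible: "zariski_irreducible n R"
proof -
  obtain u c where c: "\<forall>i<n. c i \<noteq> 0" and u: "param n u = (\<lambda>i. c i *s (if i < n then H i else 0))"
    using param_covers_realization[OF H_in_realization] by blast
  have "nondeg (param n u) \<noteq> 0" using c u by (intro nondeg_rescaled_H[of c]) simp
  moreover have "\<And>i. i < n \<Longrightarrow> polyvec n (\<lambda>v. param n v i)" using polyvec_param by simp
  moreover have "(\<lambda>v. nondeg (param n v)) \<in> polyfun n"
    using polyfun_compose[OF polyfun_nondeg] polyvec_param by simp
  moreover have "R \<subseteq> proj_tuples n" by (auto simp: realization_space_def)
  ultimately show ?thesis
    using param_in_realization param_covers_realization
    by (intro zariski_irreducible_by_parametrization[where \<Phi> = "param n"
          and P = "\<lambda>v. nondeg (param n v)" and u = u]) auto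
qed

end

theorem mainTheorem3:
  fixes n :: nat and H :: "nat \<Rightarrow> complex^3"
  assumes "arrangement n H"
    and "\<forall>i<n. at_most_two (mult_pts {..<n} H \<inter> line_pts (H i))"
  shows "inductively_connected n H \<and>
         zariski_irreducible n (realization_space n (incidence n H))"
proof
  show "inductively_connected n H" using assms(2) by (rule inductively_connected_if_few_mult)
  interpret few_mult_arrangement n H using assms by unfold_locales
  show "zariski_irreducible n (realization_space n (incidence n H))"
    by (rule realization_irreducible)
qed

end
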